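(* For every $p\in\{1,\dots,K\}$ the total number of waiting clients in the top $p$ priority levels is geometrically distributed under $P$: for all integers $k\ge0$, $$\sum_{\substack{\mathbf n\in\mathbb N_0^K\\ n_1+\dots+n_p=k}}P(\mathbf n)=(1-\sigma_p)\,\sigma_p^{\,k}.$$ In particular the level-1 marginal is $(1-r_1)r_1^k$ and the total queue length is $(1-r)r^k$.
   Context: Fix integers $c\ge 1$, $K\ge 2$ and reals $r_1,\dots,r_K>0$ with $r=\sum_{k=1}^K r_k<1$ (here $r_k=\lambda_k/(c\mu)$ for an M/M/$c$ queue with $K$ non-preemptive priority levels, level 1 the highest). Write $\sigma_k=\sum_{j=1}^k r_j$, $\mathbf e_\kappa$ for the standard unit vectors of $\mathbb Z^K$, $\delta_{ij}$ for the Kronecker delta. Consider the equations for $(p_{\mathbf n})_{\mathbf n\in\mathbb N_0^K}$, with the convention $p_{\mathbf n}=0$ if some component of $\mathbf n$ is negative: $$(1+r)p_{\mathbf n}=\Big(\prod_{j=1}^K\delta_{0n_j}\Big)p_{\mathbf n}+\sum_{\kappa=1}^K\Big[r_\kappa p_{\mathbf n-\mathbf e_\kappa}+\Big(\prod_{j=1}^{\kappa-1}\delta_{0n_j}\Big)p_{\mathbf n+\mathbf e_\kappa}\Big],\quad \mathbf n\in\mathbb N_0^K .$$ These are the stationary balance equations for the states in which all $c$ servers are busy and $n_\kappa$ clients of level $\kappa$ wait in the queue; their nonnegative summable solutions form a one-dimensional cone, and $P$ denotes the unique solution with $\sum_{\mathbf n}P(\mathbf n)=1$. *)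

theory Defs
  imports "HOL-Analysis.Analysis"
begin

text \<open>Queue-content vectors n in N_0^K are modelled as functions nat => nat
  supported on the level set {1..K}.\<close>

definition states :: "nat \<Rightarrow> (nat \<Rightarrow> nat) set" where
  "states K = {n. \<forall>i. i \<notin> {1..K} \<longrightarrow> n i = 0}"

text \<open>p(n - e_kappa), with the convention p = 0 when a component is negative.\<close>
definition p_minus :: "((nat \<Rightarrow> nat) \<Rightarrow> real) \<Rightarrow> (nat \<Rightarrow> nat) \<Rightarrow> nat \<Rightarrow> real" where
  "p_minus p n \<kappa> = (if n \<kappa> = 0 then 0 else p (n(\<kappa> := n \<kappa> - 1)))"

definition p_plus :: "((nat \<Rightarrow> nat) \<Rightarrow> real) \<Rightarrow> (nat \<Rightarrow> nat) \<Rightarrow> nat \<Rightarrow> real" where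
  "p_plus p n \<kappa> = p (n(\<kappa> := n \<kappa> + 1))"

definition balance :: "nat \<Rightarrow> (nat \<Rightarrow> real) \<Rightarrow> ((nat \<Rightarrow> nat) \<Rightarrow> real) \<Rightarrow> bool" where
  "balance K r p \<longleftrightarrow>
     (\<forall>n \<in> states K.
        (1 + (\<Sum>j=1..K. r j)) * p n =
          (\<Prod>j=1..K. if n j = 0 then 1 else 0) * p n
          + (\<Sum>\<kappa>=1..K. r \<kappa> * p_minus p n \<kappa>
                + (\<Prod>j=1..\<kappa>-1. if n j = 0 then 1 else 0) * p_plus p n \<kappa>))"

end

theory Submission
  imports Defs
begin

text \<open>Let \<open>Q\<^sub>k\<close> be the mass that \<open>P\<close> puts on \<open>n\<^sub>1 + \<dots> + n\<^sub>p = k\<close>. Summing the balance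
  equations against the indicator of this set shows that the level count \<open>n\<^sub>1 + \<dots> + n\<^sub>p\<close>
  behaves like a birth--death chain: arrivals of the top \<open>p\<close> levels (total rate \<open>\<sigma>\<^sub>p\<close>)
  raise it by one, the other arrivals leave it unchanged, and a service completion, which
  removes a client from the highest nonempty level, lowers it exactly when it is positive.
  Hence \<open>(1 + \<sigma>\<^sub>p) Q\<^sub>k = Q\<^sub>k\<^sub>+\<^sub>1 + \<sigma>\<^sub>p Q\<^sub>k\<^sub>-\<^sub>1\<close> for \<open>k > 0\<close> and \<open>Q\<^sub>1 = \<sigma>\<^sub>p Q\<^sub>0\<close>, so
  \<open>Q\<^sub>k = Q\<^sub>0 \<sigma>\<^sub>p\<^sup>k\<close>, and normalisation gives \<open>Q\<^sub>0 = 1 - \<sigma>\<^sub>p\<close>.\<close>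

lemma has_sum_sum:
  fixes f :: "'i \<Rightarrow> 'a \<Rightarrow> 'b :: topological_comm_monoid_add"
  assumes "finite I" "\<And>i. i \<in> I \<Longrightarrow> (f i has_sum s i) A"
  shows "((\<lambda>x. \<Sum>i\<in>I. f i x) has_sum (\<Sum>i\<in>I. s i)) A"
  using assms by (induction I rule: finite_induct) (auto intro!: has_sum_add)

lemma summable_on_bounded_weight:
  fixes P W :: "'a \<Rightarrow> real"
  assumes "P summable_on A" "\<And>x. x \<in> A \<Longrightarrow> 0 \<le> P x" "\<And>x. x \<in> A \<Longrightarrow> \<bar>W x\<bar> \<le> B"
  shows "(\<lambda>x. W x * P x) summable_on A"
proof -
  have "(\<lambda>x. norm (W x * P x)) summable_on A"
  proof (rule Infinite_Sum.abs_summable_on_comparison_test')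
    show "(\<lambda>x. B * P x) summable_on A"
      using assms(1) by (rule summable_on_cmult_right)
    show "norm (W x * P x) \<le> B * P x" if "x \<in> A" for x
      using assms(2,3)[OF that] by (simp add: abs_mult mult_right_mono)
  qed
  then show ?thesis
    using summable_on_iff_abs_summable_on_real by blast
qed

lemma has_sum_fibres:
  fixes P :: "'a \<Rightarrow> real"
  assumes "(P has_sum s) A"
  shows "((\<lambda>k. infsum P {x \<in> A. f x = k}) has_sum s) UNIV"
proof (rule has_sum_Sigma')
  have "bij_betw (\<lambda>x. (f x, x)) A (SIGMA k:UNIV. {x \<in> A. f x = k})"
    by (auto simp: bij_betw_def inj_on_def)
  then show "((\<lambda>(k, x). P x) has_sum s) (SIGMA k:UNIV. {x \<in> A. f x = k})"
    using has_sum_reindex_bij_betw[of "\<lambda>x. (f x, x)"] assms by fastforce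
  show "((\<lambda>x. (\<lambda>(k, x). P x) (k, x)) has_sum infsum P {x \<in> A. f x = k}) {x \<in> A. f x = k}" for k
    using summable_on_subset_banach[of P A "{x \<in> A. f x = k}"] assms
    by (auto intro: has_sum_infsum dest: has_sum_imp_summable)
qed

lemma geometric_sums_eq_one:
  fixes c q :: real
  assumes "(\<lambda>k. c * q ^ k) sums 1" "\<bar>q\<bar> < 1"
  shows "c = 1 - q"
proof -
  have "(\<lambda>k. c * q ^ k) sums (c * (1 / (1 - q)))"
    using assms(2) by (intro sums_mult geometric_sums) simp
  then have "c / (1 - q) = 1"
    using sums_unique2 assms(1) by fastforce
  with assms(2) show ?thesis
    by (simp add: field_simps split: if_splits)
qed

lemma geometric_of_recurrence:
  fixes Q :: "nat \<Rightarrow> real"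
  assumes "Q 1 = q * Q 0" "\<And>k. (1 + q) * Q (Suc k) = Q (Suc (Suc k)) + q * Q k"
  shows "Q k = Q 0 * q ^ k"
proof -
  have step: "Q (Suc k) = q * Q k" for k
  proof (induction k)
    case (Suc k)
    with assms(2)[of k] show ?case
      by (simp add: algebra_simps)
  qed (use assms(1) in simp)
  show ?thesis
    by (induction k) (simp_all add: step)
qed

lemma fun_upd_in_states: "m \<in> states K \<Longrightarrow> \<kappa> \<in> {1..K} \<Longrightarrow> m(\<kappa> := v) \<in> states K"
  by (auto simp: states_def)

lemma inj_fun_upd_incr: "inj (\<lambda>m :: nat \<Rightarrow> nat. m(\<kappa> := m \<kappa> + 1))"
proof (rule injI)
  fix a b :: "nat \<Rightarrow> nat"
  assume "a(\<kappa> := a \<kappa> + 1) = b(\<kappa> := b \<kappa> + 1)"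
  then have "(a(\<kappa> := a \<kappa> + 1)) j = (b(\<kappa> := b \<kappa> + 1)) j" for j
    by simp
  then show "a = b"
    by (metis add_right_cancel fun_upd_apply ext)
qed

lemma image_incr_states:
  assumes "\<kappa> \<in> {1..K}"
  shows "(\<lambda>m. m(\<kappa> := m \<kappa> + 1)) ` states K = {n \<in> states K. n \<kappa> \<noteq> 0}"
proof (intro equalityI subsetI)
  fix n assume n: "n \<in> {n \<in> states K. n \<kappa> \<noteq> 0}"
  then have "n = (n(\<kappa> := n \<kappa> - 1))(\<kappa> := n \<kappa> - 1 + 1)"
    by auto
  moreover have "n(\<kappa> := n \<kappa> - 1) \<in> states K"
    using n assms by (simp add: fun_upd_in_states)
  ultimately show "n \<in> (\<lambda>m. m(\<kappa> := m \<kappa> + 1)) ` states K"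
    by (metis (no_types, lifting) fun_upd_same image_eqI)
qed (use assms in \<open>auto simp: states_def\<close>)

lemma has_sum_reindex_incr:
  assumes "\<kappa> \<in> {1..K}"
  shows "(f has_sum X) {n \<in> states K. n \<kappa> \<noteq> 0} \<longleftrightarrow>
         ((\<lambda>m. f (m(\<kappa> := m \<kappa> + 1))) has_sum X) (states K)"
  unfolding image_incr_states[OF assms, symmetric]
  using has_sum_reindex[OF inj_on_subset[OF inj_fun_upd_incr[of \<kappa>] subset_UNIV[of "states K"]], of f X]
  by (simp add: comp_def)

lemma has_sum_p_minus:
  assumes "\<kappa> \<in> {1..K}"
  shows "((\<lambda>n. W n * p_minus P n \<kappa>) has_sum X) (states K) \<longleftrightarrow>
         ((\<lambda>m. W (m(\<kappa> := m \<kappa> + 1)) * P m) has_sum X) (states K)"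
proof -
  have "((\<lambda>n. W n * p_minus P n \<kappa>) has_sum X) (states K) \<longleftrightarrow>
        ((\<lambda>n. W n * p_minus P n \<kappa>) has_sum X) {n \<in> states K. n \<kappa> \<noteq> 0}"
    by (rule has_sum_cong_neutral) (auto simp: p_minus_def)
  also have "\<dots> \<longleftrightarrow> ((\<lambda>m. W (m(\<kappa> := m \<kappa> + 1)) * p_minus P (m(\<kappa> := m \<kappa> + 1)) \<kappa>)
                  has_sum X) (states K)"
    by (rule has_sum_reindex_incr[OF assms])
  also have "\<dots> \<longleftrightarrow> ((\<lambda>m. W (m(\<kappa> := m \<kappa> + 1)) * P m) has_sum X) (states K)"
    by (simp add: p_minus_def)
  finally show ?thesis .
qed

lemma has_sum_p_plus:
  assumes "\<kappa> \<in> {1..K}"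
  shows "((\<lambda>n. W n * p_plus P n \<kappa>) has_sum X) (states K) \<longleftrightarrow>
         ((\<lambda>m. of_bool (m \<kappa> \<noteq> 0) * W (m(\<kappa> := m \<kappa> - 1)) * P m) has_sum X) (states K)"
proof -
  have "((\<lambda>m. of_bool (m \<kappa> \<noteq> 0) * W (m(\<kappa> := m \<kappa> - 1)) * P m) has_sum X) (states K) \<longleftrightarrow>
        ((\<lambda>m. of_bool (m \<kappa> \<noteq> 0) * W (m(\<kappa> := m \<kappa> - 1)) * P m) has_sum X) {n \<in> states K. n \<kappa> \<noteq> 0}"
    by (rule has_sum_cong_neutral) auto
  also have "\<dots> \<longleftrightarrow> ((\<lambda>n. W n * p_plus P n \<kappa>) has_sum X) (states K)"
    by (subst has_sum_reindex_incr[OF assms]) (simp add: p_plus_def)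
  finally show ?thesis ..
qed

text \<open>\<open>(1 + r)\<close> times the transition operator of the uniformised queue-content chain: a level
  \<open>\<kappa>\<close> arrival at rate \<open>r \<kappa>\<close>, and at rate 1 a service completion, which removes a client
  from the highest nonempty level and leaves the empty queue unchanged.\<close>

definition uniformized_step ::
    "nat \<Rightarrow> (nat \<Rightarrow> real) \<Rightarrow> ((nat \<Rightarrow> nat) \<Rightarrow> real) \<Rightarrow> (nat \<Rightarrow> nat) \<Rightarrow> real" where
  "uniformized_step K r W m =
     of_bool (\<forall>j\<in>{1..K}. m j = 0) * W m
     + (\<Sum>\<kappa>=1..K. r \<kappa> * W (m(\<kappa> := m \<kappa> + 1))
          + of_bool (m \<kappa> \<noteq> 0 \<and> (\<forall>j\<in>{1..<\<kappa>}. m j = 0)) * W (m(\<kappa> := m \<kappa> - 1)))"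

lemma prod_indicator:
  "finite A \<Longrightarrow> (\<Prod>j\<in>A. if Q j then 1 else 0) = (of_bool (\<forall>j\<in>A. Q j) :: 'a :: comm_semiring_1)"
  by (induction A rule: finite_induct) auto

text \<open>Summation by parts: sum the balance equations against \<open>W\<close> and move the shifts
  \<open>n \<mp> e\<^sub>\<kappa>\<close> from \<open>P\<close> onto \<open>W\<close>.\<close>

lemma balance_has_sum_step:
  fixes W :: "(nat \<Rightarrow> nat) \<Rightarrow> real"
  assumes bal: "balance K r P" and nonneg: "\<And>n. n \<in> states K \<Longrightarrow> 0 \<le> P n"
    and summ: "P summable_on states K" and bounded: "\<And>n. n \<in> states K \<Longrightarrow> \<bar>W n\<bar> \<le> B"
  shows "((\<lambda>m. uniformized_step K r W m * P m) has_sum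
           (1 + (\<Sum>j=1..K. r j)) * infsum (\<lambda>n. W n * P n) (states K)) (states K)"
proof -
  have "0 \<le> B"
    using bounded[of "\<lambda>_. 0"] by (simp add: states_def)
  define Z where "Z n = of_bool (\<forall>j\<in>{1..K}. n j = 0) * W n" for n
  define U where "U \<kappa> m = r \<kappa> * W (m(\<kappa> := m \<kappa> + 1))" for \<kappa> m
  define D where "D \<kappa> m = of_bool (m \<kappa> \<noteq> 0) * (of_bool (\<forall>j\<in>{1..<\<kappa>}. m j = 0) * W (m(\<kappa> := m \<kappa> - 1)))"
    for \<kappa> m
  define E where "E V = infsum (\<lambda>m. V m * P m) (states K)" for V
  define S where "S = E Z + (\<Sum>\<kappa>=1..K. E (U \<kappa>) + E (D \<kappa>))"
  have has_sum_E: "((\<lambda>m. V m * P m) has_sum E V) (states K)"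
    if "\<And>m. m \<in> states K \<Longrightarrow> \<bar>V m\<bar> \<le> C" for V C
    unfolding E_def using summable_on_bounded_weight[OF summ nonneg that] by (rule has_sum_infsum)
  have hZ: "((\<lambda>m. Z m * P m) has_sum E Z) (states K)"
    by (rule has_sum_E[of _ B]) (simp add: Z_def bounded \<open>0 \<le> B\<close>)
  have hU: "((\<lambda>m. U \<kappa> m * P m) has_sum E (U \<kappa>)) (states K)" if \<kappa>: "\<kappa> \<in> {1..K}" for \<kappa>
    by (rule has_sum_E[of _ "\<bar>r \<kappa>\<bar> * B"])
      (auto simp: U_def abs_mult intro!: mult_left_mono bounded fun_upd_in_states \<kappa>)
  have hD: "((\<lambda>m. D \<kappa> m * P m) has_sum E (D \<kappa>)) (states K)" if \<kappa>: "\<kappa> \<in> {1..K}" for \<kappa>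
    by (rule has_sum_E[of _ B]) (simp add: D_def \<open>0 \<le> B\<close> bounded fun_upd_in_states[OF _ \<kappa>])
  have step_sum: "((\<lambda>m. uniformized_step K r W m * P m) has_sum S) (states K)"
  proof -
    have "((\<lambda>m. Z m * P m + (\<Sum>\<kappa>=1..K. U \<kappa> m * P m + D \<kappa> m * P m)) has_sum S) (states K)"
      unfolding S_def by (intro has_sum_add has_sum_sum finite_atLeastAtMost hZ) (auto intro: hU hD)
    moreover have "uniformized_step K r W m * P m = Z m * P m + (\<Sum>\<kappa>=1..K. U \<kappa> m * P m + D \<kappa> m * P m)"
      for m
      by (simp add: uniformized_step_def Z_def U_def D_def of_bool_conj sum_distrib_right distrib_right
          mult.assoc)
    ultimately show ?thesis
      by simp
  qed
  have balance_sum: "((\<lambda>n. (1 + (\<Sum>j=1..K. r j)) * (W n * P n)) has_sum S) (states K)"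
  proof -
    have "((\<lambda>n. Z n * P n + (\<Sum>\<kappa>=1..K. (r \<kappa> * W n) * p_minus P n \<kappa>
             + (of_bool (\<forall>j\<in>{1..<\<kappa>}. n j = 0) * W n) * p_plus P n \<kappa>)) has_sum S) (states K)"
      unfolding S_def
    proof (intro has_sum_add has_sum_sum finite_atLeastAtMost hZ)
      fix \<kappa> assume \<kappa>: "\<kappa> \<in> {1..K}"
      show "((\<lambda>n. (r \<kappa> * W n) * p_minus P n \<kappa>) has_sum E (U \<kappa>)) (states K)"
        using hU[OF \<kappa>] by (simp add: has_sum_p_minus[OF \<kappa>] U_def)
      show "((\<lambda>n. (of_bool (\<forall>j\<in>{1..<\<kappa>}. n j = 0) * W n) * p_plus P n \<kappa>) has_sum E (D \<kappa>))
          (states K)"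
        using hD[OF \<kappa>] unfolding has_sum_p_plus[OF \<kappa>] by (simp add: D_def)
    qed
    moreover have "(1 + (\<Sum>j=1..K. r j)) * (W n * P n) =
        Z n * P n + (\<Sum>\<kappa>=1..K. (r \<kappa> * W n) * p_minus P n \<kappa>
          + (of_bool (\<forall>j\<in>{1..<\<kappa>}. n j = 0) * W n) * p_plus P n \<kappa>)"
      if "n \<in> states K" for n
    proof -
      have "{1..\<kappa> - 1} = {1..<\<kappa>}" for \<kappa> :: nat
        by auto
      then have "(1 + (\<Sum>j=1..K. r j)) * P n = of_bool (\<forall>j\<in>{1..K}. n j = 0) * P n
          + (\<Sum>\<kappa>=1..K. r \<kappa> * p_minus P n \<kappa> + of_bool (\<forall>j\<in>{1..<\<kappa>}. n j = 0) * p_plus P n \<kappa>)"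
        using bal that by (simp add: balance_def prod_indicator)
      then have "W n * ((1 + (\<Sum>j=1..K. r j)) * P n) = W n * (of_bool (\<forall>j\<in>{1..K}. n j = 0) * P n
          + (\<Sum>\<kappa>=1..K. r \<kappa> * p_minus P n \<kappa> + of_bool (\<forall>j\<in>{1..<\<kappa>}. n j = 0) * p_plus P n \<kappa>))"
        by (rule arg_cong)
      then show ?thesis
        by (simp only: Z_def sum_distrib_left distrib_left mult_ac)
    qed
    ultimately show ?thesis
      by (subst has_sum_cong) auto
  qed
  have "((\<lambda>n. (1 + (\<Sum>j=1..K. r j)) * (W n * P n)) has_sum (1 + (\<Sum>j=1..K. r j)) * E W) (states K)"
    by (intro has_sum_cmult_right has_sum_E[of _ B] bounded)
  with balance_sum have "S = (1 + (\<Sum>j=1..K. r j)) * E W"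
    by (rule has_sum_unique)
  with step_sum show ?thesis
    by (simp add: E_def)
qed

definition waiting :: "nat \<Rightarrow> (nat \<Rightarrow> nat) \<Rightarrow> nat" where
  "waiting p n = (\<Sum>j=1..p. n j)"

lemma waiting_upd_outside: "\<kappa> \<notin> {1..p} \<Longrightarrow> waiting p (m(\<kappa> := v)) = waiting p m"
  unfolding waiting_def by (intro sum.cong) auto

lemma waiting_upd_inside: "\<kappa> \<in> {1..p} \<Longrightarrow> waiting p (m(\<kappa> := v)) + m \<kappa> = waiting p m + v"
  unfolding waiting_def
  using sum.remove[of "{1..p}" \<kappa> m] sum.remove[of "{1..p}" \<kappa> "m(\<kappa> := v)"] by simp

lemma sum_split_level:
  fixes f :: "nat \<Rightarrow> 'a :: comm_monoid_add"
  shows "p \<le> K \<Longrightarrow> (\<Sum>j=1..K. f j) = (\<Sum>j=1..p. f j) + (\<Sum>j\<in>{p<..K}. f j)"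
  by (subst sum.union_disjoint[symmetric]) (auto intro: sum.cong)

lemma sum_highest_nonempty:
  fixes f :: "nat \<Rightarrow> 'a :: semiring_1"
  assumes "\<kappa>\<^sub>0 \<in> {1..K}" "m \<kappa>\<^sub>0 \<noteq> 0" "\<forall>j\<in>{1..<\<kappa>\<^sub>0}. m j = 0"
  shows "(\<Sum>\<kappa>=1..K. of_bool (m \<kappa> \<noteq> 0 \<and> (\<forall>j\<in>{1..<\<kappa>}. m j = 0)) * f \<kappa>) = f \<kappa>\<^sub>0"
proof -
  have "(m \<kappa> \<noteq> 0 \<and> (\<forall>j\<in>{1..<\<kappa>}. m j = 0)) \<longleftrightarrow> \<kappa> = \<kappa>\<^sub>0" if "\<kappa> \<in> {1..K}" for \<kappa>
    using assms that by (cases \<kappa> \<kappa>\<^sub>0 rule: linorder_cases) auto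
  then have "(\<Sum>\<kappa>=1..K. of_bool (m \<kappa> \<noteq> 0 \<and> (\<forall>j\<in>{1..<\<kappa>}. m j = 0)) * f \<kappa>)
      = (\<Sum>\<kappa>=1..K. if \<kappa> = \<kappa>\<^sub>0 then f \<kappa> else 0)"
    by (intro sum.cong) auto
  then show ?thesis
    using assms(1) by simp
qed

lemma arrivals_level_indicator:
  fixes r :: "nat \<Rightarrow> real"
  assumes "p \<le> K"
  shows "(\<Sum>\<kappa>=1..K. r \<kappa> * of_bool (waiting p (m(\<kappa> := m \<kappa> + 1)) = k))
       = (\<Sum>j=1..p. r j) * of_bool (waiting p m + 1 = k) + (\<Sum>j\<in>{p<..K}. r j) * of_bool (waiting p m = k)"
proof -
  let ?F = "\<lambda>\<kappa>. r \<kappa> * of_bool (waiting p (m(\<kappa> := m \<kappa> + 1)) = k)"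
  have "(\<Sum>\<kappa>=1..p. ?F \<kappa>) = (\<Sum>\<kappa>=1..p. r \<kappa> * of_bool (waiting p m + 1 = k))"
  proof (intro sum.cong refl)
    fix \<kappa> assume "\<kappa> \<in> {1..p}"
    from waiting_upd_inside[OF this, of m "m \<kappa> + 1"] show "?F \<kappa> = r \<kappa> * of_bool (waiting p m + 1 = k)"
      by simp
  qed
  moreover have "(\<Sum>\<kappa>\<in>{p<..K}. ?F \<kappa>) = (\<Sum>\<kappa>\<in>{p<..K}. r \<kappa> * of_bool (waiting p m = k))"
    by (intro sum.cong) (auto simp: waiting_upd_outside)
  ultimately show ?thesis
    using sum_split_level[OF assms, of ?F] by (simp add: sum_distrib_right)
qed

lemma services_level_indicator:
  assumes "m \<in> states K"
  shows "of_bool (\<forall>j\<in>{1..K}. m j = 0) * of_bool (waiting p m = k)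
       + (\<Sum>\<kappa>=1..K. of_bool (m \<kappa> \<noteq> 0 \<and> (\<forall>j\<in>{1..<\<kappa>}. m j = 0))
                     * of_bool (waiting p (m(\<kappa> := m \<kappa> - 1)) = k))
       = of_bool (waiting p m = Suc k) + of_bool (k = 0) * (of_bool (waiting p m = 0) :: real)"
    (is "?lhs = _")
proof (cases "\<forall>j\<in>{1..K}. m j = 0")
  case True
  with assms have "m = (\<lambda>_. 0)"
    by (intro ext) (fastforce simp: states_def)
  then show ?thesis
    by (simp add: waiting_def)
next
  case False
  then obtain \<kappa>\<^sub>0 where \<kappa>\<^sub>0: "\<kappa>\<^sub>0 \<in> {1..K}" "m \<kappa>\<^sub>0 \<noteq> 0" "\<forall>j\<in>{1..<\<kappa>\<^sub>0}. m j = 0"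
    using exists_least_iff[of "\<lambda>j. j \<in> {1..K} \<and> m j \<noteq> 0"] assms
    by (auto simp: states_def)
  with False have lhs: "?lhs = of_bool (waiting p (m(\<kappa>\<^sub>0 := m \<kappa>\<^sub>0 - 1)) = k)"
    by (subst sum_highest_nonempty[OF \<kappa>\<^sub>0]) simp
  show ?thesis
  proof (cases "\<kappa>\<^sub>0 \<le> p")
    case True
    then have "Suc (waiting p (m(\<kappa>\<^sub>0 := m \<kappa>\<^sub>0 - 1))) = waiting p m"
      using waiting_upd_inside[of \<kappa>\<^sub>0 p m "m \<kappa>\<^sub>0 - 1"] \<kappa>\<^sub>0 by auto
    then show ?thesis
      unfolding lhs by auto
  next
    case False
    then have "waiting p m = 0"
      using \<kappa>\<^sub>0(3) by (auto simp: waiting_def)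
    moreover have "waiting p (m(\<kappa>\<^sub>0 := m \<kappa>\<^sub>0 - 1)) = waiting p m"
      using False by (simp add: waiting_upd_outside)
    ultimately show ?thesis
      unfolding lhs by auto
  qed
qed

definition level_mass :: "nat \<Rightarrow> ((nat \<Rightarrow> nat) \<Rightarrow> real) \<Rightarrow> nat \<Rightarrow> nat \<Rightarrow> real" where
  "level_mass K P p k = infsum P {n \<in> states K. waiting p n = k}"

lemma has_sum_level_mass:
  assumes "P summable_on states K"
  shows "((\<lambda>n. of_bool (waiting p n = k) * P n) has_sum level_mass K P p k) (states K)"
proof -
  have "(P has_sum level_mass K P p k) {n \<in> states K. waiting p n = k}"
    unfolding level_mass_def using summable_on_subset_banach[OF assms] by (auto intro: has_sum_infsum)
  moreover have "((\<lambda>n. of_bool (waiting p n = k) * P n) has_sum level_mass K P p k) (states K) \<longleftrightarrow>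
      (P has_sum level_mass K P p k) {n \<in> states K. waiting p n = k}"
    by (rule has_sum_cong_neutral) auto
  ultimately show ?thesis
    by simp
qed

lemma level_mass_balance:
  assumes bal: "balance K r P" and nonneg: "\<And>n. n \<in> states K \<Longrightarrow> 0 \<le> P n"
    and summ: "P summable_on states K" and "p \<le> K"
  shows "(1 + (\<Sum>j=1..p. r j)) * level_mass K P p k = level_mass K P p (Suc k)
           + of_bool (k = 0) * level_mass K P p 0
           + of_bool (k \<noteq> 0) * (\<Sum>j=1..p. r j) * level_mass K P p (k - 1)"
proof -
  define \<sigma> where "\<sigma> = (\<Sum>j=1..p. r j)"
  define \<rho> where "\<rho> = (\<Sum>j\<in>{p<..K}. r j)"
  define Q where "Q = level_mass K P p"
  define I where "I j n = (of_bool (waiting p n = j) :: real)" for j n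
  have hI: "((\<lambda>n. I j n * P n) has_sum Q j) (states K)" for j
    unfolding I_def Q_def using summ by (rule has_sum_level_mass)
  have "((\<lambda>m. uniformized_step K r (I k) m * P m) has_sum (1 + (\<sigma> + \<rho>)) * Q k) (states K)"
    using balance_has_sum_step[OF bal nonneg summ, of "I k" 1] infsumI[OF hI]
      sum_split_level[OF \<open>p \<le> K\<close>, of r]
    by (simp add: I_def \<sigma>_def \<rho>_def)
  moreover have "((\<lambda>m. uniformized_step K r (I k) m * P m) has_sum
      Q (Suc k) + of_bool (k = 0) * Q 0 + (of_bool (k \<noteq> 0) * \<sigma>) * Q (k - 1) + \<rho> * Q k) (states K)"
  proof -
    have "uniformized_step K r (I k) m = I (Suc k) m + of_bool (k = 0) * I 0 m
        + (of_bool (k \<noteq> 0) * \<sigma>) * I (k - 1) m + \<rho> * I k m" if "m \<in> states K" for m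
      using arrivals_level_indicator[OF \<open>p \<le> K\<close>, of r m k] services_level_indicator[OF that, of p k]
      unfolding uniformized_step_def I_def \<sigma>_def \<rho>_def
      by (cases k) (simp_all add: sum.distrib algebra_simps)
    moreover have "((\<lambda>m. (I (Suc k) m + of_bool (k = 0) * I 0 m + (of_bool (k \<noteq> 0) * \<sigma>) * I (k - 1) m
        + \<rho> * I k m) * P m) has_sum
        Q (Suc k) + of_bool (k = 0) * Q 0 + (of_bool (k \<noteq> 0) * \<sigma>) * Q (k - 1) + \<rho> * Q k) (states K)"
      unfolding distrib_right mult.assoc by (intro has_sum_add has_sum_cmult_right hI)
    ultimately show ?thesis
      by (subst has_sum_cong) auto
  qed
  ultimately have "(1 + (\<sigma> + \<rho>)) * Q k =
      Q (Suc k) + of_bool (k = 0) * Q 0 + (of_bool (k \<noteq> 0) * \<sigma>) * Q (k - 1) + \<rho> * Q k"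
    by (rule has_sum_unique)
  then show ?thesis
    unfolding \<sigma>_def Q_def by (simp add: algebra_simps)
qed

lemma level_mass_geometric:
  assumes "balance K r P" and "\<And>n. n \<in> states K \<Longrightarrow> 0 \<le> P n"
    and "P summable_on states K" and "p \<le> K"
  shows "level_mass K P p k = level_mass K P p 0 * (\<Sum>j=1..p. r j) ^ k"
proof (rule geometric_of_recurrence)
  note balance = level_mass_balance[OF assms]
  show "level_mass K P p 1 = (\<Sum>j=1..p. r j) * level_mass K P p 0"
    using balance[of 0] by (simp add: algebra_simps)
  show "(1 + (\<Sum>j=1..p. r j)) * level_mass K P p (Suc k)
      = level_mass K P p (Suc (Suc k)) + (\<Sum>j=1..p. r j) * level_mass K P p k" for k
    using balance[of "Suc k"] by simp
qed

theorem mainTheorem4: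
  fixes K :: nat and r :: "nat \<Rightarrow> real" and P :: "(nat \<Rightarrow> nat) \<Rightarrow> real"
  assumes K2: "K \<ge> 2"
    and rpos: "\<forall>k\<in>{1..K}. r k > 0"
    and rlt1: "(\<Sum>k=1..K. r k) < 1"
    and bal: "balance K r P"
    and nonneg: "\<forall>n\<in>states K. P n \<ge> 0"
    and summ: "P summable_on states K"
    and norm: "infsum P (states K) = 1"
    and p: "p \<in> {1..K}"
  shows "infsum P {n \<in> states K. (\<Sum>j=1..p. n j) = k}
           = (1 - (\<Sum>j=1..p. r j)) * (\<Sum>j=1..p. r j) ^ k"
proof -
  define \<sigma> where "\<sigma> = (\<Sum>j=1..p. r j)"
  define Q where "Q = level_mass K P p"
  have "p \<le> K"
    using p by simp
  have geometric: "Q k = Q 0 * \<sigma> ^ k" for k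
    unfolding Q_def \<sigma>_def using level_mass_geometric[OF bal _ summ \<open>p \<le> K\<close>] nonneg by blast
  have r_nonneg: "0 \<le> r j" if "j \<in> {1..K}" for j
    using rpos that by fastforce
  have "0 \<le> \<sigma>"
    unfolding \<sigma>_def using \<open>p \<le> K\<close> by (intro sum_nonneg r_nonneg) simp
  moreover have "\<sigma> \<le> (\<Sum>j=1..K. r j)"
    unfolding \<sigma>_def using \<open>p \<le> K\<close> by (intro sum_mono2 r_nonneg) auto
  moreover have "(Q has_sum 1) UNIV"
    using has_sum_fibres[where P=P and s=1 and A="states K" and f="waiting p"] summ norm
    unfolding Q_def level_mass_def by (metis has_sum_infsum)
  then have "(\<lambda>k. Q 0 * \<sigma> ^ k) sums 1"
    using geometric[symmetric] by (simp add: has_sum_imp_sums)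
  ultimately have "Q 0 = 1 - \<sigma>"
    using rlt1 by (intro geometric_sums_eq_one) auto
  with geometric show ?thesis
    by (simp add: Q_def level_mass_def waiting_def \<sigma>_def)
qed

end
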